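(* Let $G\subset\mathrm{Diff}^1_+([0,1])$ be a group and let $\mathcal H=(h_n)_{n\in\mathbb N}$ be a sequence in $\mathrm{Diff}^1_+([0,1])$ such that $h_n g h_n^{-1}\to\mathrm{id}$ in the $C^1$-topology for every $g\in G$. Let $G_{\mathcal H}$ be the set of all $g\in\mathrm{Diff}^1_+([0,1])$ such that $h_n g h_n^{-1}\to\mathrm{id}$ in the $C^1$-topology. Then the completion $I^\infty(G)$ of $G$ is contained in $G_{\mathcal H}$; in particular $I^\infty(G)$ is a group of $C^1$-diffeomorphisms which is $C^1$-close to the identity.
   Context: (Such a $G$ is without linked fixed points.) A homeomorphism $h\in\mathrm{Homeo}_+([0,1])$ is induced by $g$ if $h(x)\in\{x,g(x)\}$ for every $x\in[0,1]$. For a group $G$, $I(G)$ is the group generated by all homeomorphisms induced by elements of $G$; $I^0(G)=G$, $I^{n+1}(G)=I(I^n(G))$, and the completion is $I^\infty(G)=\bigcup_n I^n(G)$. A group $G\subset \mathrm{Diff}^1_+([0,1])$ is $C^1$-close to the identity if there is a sequence $h_n\in \mathrm{Diff}^1_+([0,1])$ such that $h_n g h_n^{-1}\to \mathrm{id}$ in the $C^1$-topology for every $g\in G$. *)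

theory Defs
  imports "HOL-Analysis.Analysis"
begin

text \<open>Convention: maps of [0,1] are represented as functions real => real which
  are the identity outside [0,1]; this makes composition and inversion canonical.\<close>

definition Homeo_plus :: "(real \<Rightarrow> real) set" where
  "Homeo_plus = {f. continuous_on {0..1} f \<and> strict_mono_on {0..1} f
      \<and> f ` {0..1} = {0..1} \<and> (\<forall>x. x \<notin> {0..1} \<longrightarrow> f x = x)}"

definition D1 :: "(real \<Rightarrow> real) \<Rightarrow> real \<Rightarrow> real" where
  "D1 f x = (THE d. (f has_real_derivative d) (at x within {0..1}))"

text \<open>Orientation preserving C^1 diffeomorphisms of [0,1]: C^1 homeomorphisms
  with nowhere vanishing (hence positive) derivative, so that the inverse is C^1.\<close>
definition Diff1_plus :: "(real \<Rightarrow> real) set" where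
  "Diff1_plus = {f \<in> Homeo_plus.
      (\<forall>x\<in>{0..1}. (f has_real_derivative D1 f x) (at x within {0..1}) \<and> D1 f x \<noteq> 0)
      \<and> continuous_on {0..1} (D1 f)}"

definition C1_tendsto_id :: "(nat \<Rightarrow> real \<Rightarrow> real) \<Rightarrow> bool" where
  "C1_tendsto_id s \<longleftrightarrow> uniform_limit {0..1} s (\<lambda>x. x) sequentially
      \<and> uniform_limit {0..1} (\<lambda>n. D1 (s n)) (\<lambda>x. 1) sequentially"

definition is_group :: "(real \<Rightarrow> real) set \<Rightarrow> bool" where
  "is_group G \<longleftrightarrow> id \<in> G \<and> (\<forall>f\<in>G. \<forall>g\<in>G. f \<circ> g \<in> G) \<and> (\<forall>f\<in>G. inv f \<in> G)"

inductive_set gen_group :: "(real \<Rightarrow> real) set \<Rightarrow> (real \<Rightarrow> real) set" for S where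
  gen_id: "id \<in> gen_group S"
| gen_base: "s \<in> S \<Longrightarrow> s \<in> gen_group S"
| gen_comp: "a \<in> gen_group S \<Longrightarrow> b \<in> gen_group S \<Longrightarrow> a \<circ> b \<in> gen_group S"
| gen_inv: "a \<in> gen_group S \<Longrightarrow> inv a \<in> gen_group S"

definition induced_by :: "(real \<Rightarrow> real) \<Rightarrow> (real \<Rightarrow> real) \<Rightarrow> bool" where
  "induced_by h g \<longleftrightarrow> h \<in> Homeo_plus \<and> (\<forall>x\<in>{0..1}. h x = x \<or> h x = g x)"

definition I_op :: "(real \<Rightarrow> real) set \<Rightarrow> (real \<Rightarrow> real) set" where
  "I_op G = gen_group {h. \<exists>g\<in>G. induced_by h g}"

definition I_inf :: "(real \<Rightarrow> real) set \<Rightarrow> (real \<Rightarrow> real) set" where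
  "I_inf G = (\<Union>n. (I_op ^^ n) G)"

definition G_H :: "(nat \<Rightarrow> real \<Rightarrow> real) \<Rightarrow> (real \<Rightarrow> real) set" where
  "G_H h = {g \<in> Diff1_plus. C1_tendsto_id (\<lambda>n. h n \<circ> g \<circ> inv (h n))}"

definition C1_close_to_id :: "(real \<Rightarrow> real) set \<Rightarrow> bool" where
  "C1_close_to_id G \<longleftrightarrow> (\<exists>h. (\<forall>n. h n \<in> Diff1_plus) \<and>
      (\<forall>g\<in>G. C1_tendsto_id (\<lambda>n. h n \<circ> g \<circ> inv (h n))))"

end

theory Submission
  imports Defs
begin

text \<open>If \<open>g\<close> lies in \<open>G_H\<close>, then \<open>g' = 1\<close> at every fixed point \<open>p\<close> of \<open>g\<close>: the conjugate
  \<open>h\<^sub>n g h\<^sub>n\<inverse>\<close> has the same derivative at its fixed point \<open>h\<^sub>n p\<close>, and these derivatives tend to \<open>1\<close>.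
  A homeomorphism \<open>k\<close> induced by \<open>g\<close> agrees with \<open>g\<close> near every point it moves and with the
  identity near every point where it differs from \<open>g\<close>; at the remaining points \<open>k\<close> and \<open>g\<close> share
  a fixed point with \<open>g' = 1\<close>. Hence \<open>k\<close> is \<open>C\<^sup>1\<close> with \<open>k'(x) \<in> {1, g'(x)}\<close>, and likewise
  \<open>h\<^sub>n k h\<^sub>n\<inverse>\<close>, which is induced by \<open>h\<^sub>n g h\<^sub>n\<inverse>\<close>. So the \<open>C\<^sup>1\<close> distance of \<open>h\<^sub>n k h\<^sub>n\<inverse>\<close> to the
  identity is pointwise dominated by that of \<open>h\<^sub>n g h\<^sub>n\<inverse>\<close>, and \<open>k \<in> G_H\<close>. Since \<open>G_H\<close> is a group,
  it contains every \<open>I\<^sup>n(G)\<close>, and \<open>I\<^sup>\<infinity>(G)\<close> is an increasing union of groups.\<close>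

section \<open>Orientation-preserving homeomorphisms of \<open>[0,1]\<close>\<close>

lemma Homeo_plus_continuous_on: "f \<in> Homeo_plus \<Longrightarrow> continuous_on {0..1} f"
  unfolding Homeo_plus_def by blast

lemma Homeo_plus_strict_mono_on: "f \<in> Homeo_plus \<Longrightarrow> strict_mono_on {0..1} f"
  unfolding Homeo_plus_def by blast

lemma Homeo_plus_image: "f \<in> Homeo_plus \<Longrightarrow> f ` {0..1} = {0..1}"
  unfolding Homeo_plus_def by blast

lemma Homeo_plus_outside: "f \<in> Homeo_plus \<Longrightarrow> x \<notin> {0..1} \<Longrightarrow> f x = x"
  unfolding Homeo_plus_def by blast

lemma Homeo_plus_in_iff:
  assumes "f \<in> Homeo_plus"
  shows "f x \<in> {0..1} \<longleftrightarrow> x \<in> {0..1}"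
  using Homeo_plus_image[OF assms] Homeo_plus_outside[OF assms, of x] by (cases "x \<in> {0..1}") auto

lemma Homeo_plus_bij:
  assumes f: "f \<in> Homeo_plus"
  shows "bij f"
proof (rule bijI)
  have inj_interval: "inj_on f {0..1}"
    using strict_mono_on_imp_inj_on[OF Homeo_plus_strict_mono_on[OF f]] .
  show "inj f"
  proof (rule injI)
    fix x y assume eq: "f x = f y"
    then have "x \<in> {0..1} \<longleftrightarrow> y \<in> {0..1}" using Homeo_plus_in_iff[OF f] by metis
    then show "x = y"
      using eq inj_onD[OF inj_interval, of x y] Homeo_plus_outside[OF f, of x] Homeo_plus_outside[OF f, of y]
      by auto
  qed
  have "y \<in> range f" for y
  proof (cases "y \<in> {0..1}")
    case True then show ?thesis using Homeo_plus_image[OF f] by blast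
  next
    case False then show ?thesis using Homeo_plus_outside[OF f, of y] by (metis rangeI)
  qed
  then show "surj f" by blast
qed

lemma Homeo_plus_inv_f: "f \<in> Homeo_plus \<Longrightarrow> inv f (f x) = x"
  by (simp add: bij_is_inj Homeo_plus_bij)

lemma Homeo_plus_f_inv: "f \<in> Homeo_plus \<Longrightarrow> f (inv f x) = x"
  by (simp add: bij_is_surj Homeo_plus_bij surj_f_inv_f)

lemma Homeo_plus_inv_in_iff: "f \<in> Homeo_plus \<Longrightarrow> inv f x \<in> {0..1} \<longleftrightarrow> x \<in> {0..1}"
  by (metis Homeo_plus_in_iff Homeo_plus_f_inv)

lemma Homeo_plus_inv:
  assumes f: "f \<in> Homeo_plus"
  shows "inv f \<in> Homeo_plus"
proof -
  have "continuous_on (f ` {0..1}) (inv f)"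
    by (rule continuous_on_inv[OF Homeo_plus_continuous_on[OF f]]) (auto simp: Homeo_plus_inv_f[OF f])
  then have "continuous_on {0..1} (inv f)"
    by (simp add: Homeo_plus_image[OF f])
  moreover have "strict_mono_on {0..1} (inv f)"
  proof (rule strict_mono_onI)
    fix r s :: real assume rs: "r \<in> {0..1}" "s \<in> {0..1}" "r < s"
    show "inv f r < inv f s"
    proof (rule ccontr)
      assume "\<not> inv f r < inv f s"
      then have "f (inv f s) \<le> f (inv f r)"
        using strict_mono_on_leD[OF Homeo_plus_strict_mono_on[OF f]] rs Homeo_plus_inv_in_iff[OF f]
        by (metis linorder_not_less)
      then show False using rs(3) by (simp add: Homeo_plus_f_inv[OF f])
    qed
  qed
  moreover have "inv f ` {0..1} = {0..1}"
    using Homeo_plus_inv_in_iff[OF f] Homeo_plus_inv_f[OF f] Homeo_plus_in_iff[OF f]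
    by (metis image_eqI subsetI subset_antisym image_subsetI)
  moreover have "\<forall>x. x \<notin> {0..1} \<longrightarrow> inv f x = x"
    using Homeo_plus_outside[OF f] Homeo_plus_inv_f[OF f] by metis
  ultimately show ?thesis unfolding Homeo_plus_def by blast
qed

lemma Homeo_plus_comp:
  assumes f: "f \<in> Homeo_plus" and g: "g \<in> Homeo_plus"
  shows "f \<circ> g \<in> Homeo_plus"
proof -
  have "continuous_on {0..1} (f \<circ> g)"
    by (rule continuous_on_compose[OF Homeo_plus_continuous_on[OF g]])
       (simp add: Homeo_plus_image[OF g] Homeo_plus_continuous_on[OF f])
  moreover have "strict_mono_on {0..1} (f \<circ> g)"
    using Homeo_plus_strict_mono_on[OF f] Homeo_plus_strict_mono_on[OF g] Homeo_plus_in_iff[OF g]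
    by (simp add: strict_mono_on_def)
  moreover have "(f \<circ> g) ` {0..1} = {0..1}"
    using Homeo_plus_image[OF f] Homeo_plus_image[OF g] by (metis image_comp)
  ultimately show ?thesis
    unfolding Homeo_plus_def using Homeo_plus_outside[OF f] Homeo_plus_outside[OF g] by simp
qed

lemma Homeo_plus_id: "id \<in> Homeo_plus"
  unfolding Homeo_plus_def by (auto simp: strict_mono_on_def)

section \<open>\<open>C\<^sup>1\<close> diffeomorphisms\<close>

lemma D1_eqI:
  assumes x: "x \<in> {0..1}" and d: "(f has_real_derivative d) (at x within {0..1})"
  shows "D1 f x = d"
  unfolding D1_def
proof (rule the_equality)
  show "(f has_real_derivative d) (at x within {0..1})" by (rule d)
  fix d' assume "(f has_real_derivative d') (at x within {0..1})"
  with d x show "d' = d"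
    using vector_derivative_unique_within_closed_interval[of 0 1 x f d' d]
    by (simp add: has_real_derivative_iff_has_vector_derivative)
qed

lemma Diff1_plus_Homeo_plus: "f \<in> Diff1_plus \<Longrightarrow> f \<in> Homeo_plus"
  unfolding Diff1_plus_def by blast

lemma Diff1_plus_has_derivative:
  "f \<in> Diff1_plus \<Longrightarrow> x \<in> {0..1} \<Longrightarrow> (f has_real_derivative D1 f x) (at x within {0..1})"
  unfolding Diff1_plus_def by blast

lemma Diff1_plus_D1_nonzero: "f \<in> Diff1_plus \<Longrightarrow> x \<in> {0..1} \<Longrightarrow> D1 f x \<noteq> 0"
  unfolding Diff1_plus_def by blast

lemma Diff1_plus_D1_continuous_on: "f \<in> Diff1_plus \<Longrightarrow> continuous_on {0..1} (D1 f)"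
  unfolding Diff1_plus_def by blast

lemma Diff1_plusI:
  assumes "f \<in> Homeo_plus"
    and der: "\<And>x. x \<in> {0..1} \<Longrightarrow> (f has_real_derivative d x) (at x within {0..1})"
    and "\<And>x. x \<in> {0..1} \<Longrightarrow> d x \<noteq> 0"
    and "continuous_on {0..1} d"
  shows "f \<in> Diff1_plus"
proof -
  have "\<forall>x\<in>{0..1}. D1 f x = d x" using D1_eqI der by blast
  then show ?thesis
    unfolding Diff1_plus_def using assms continuous_on_cong[of "{0..1}" "{0..1}" "D1 f" d] by auto
qed

lemma Diff1_plus_comp:
  assumes f: "f \<in> Diff1_plus" and g: "g \<in> Diff1_plus"
  shows "f \<circ> g \<in> Diff1_plus"
    and "x \<in> {0..1} \<Longrightarrow> D1 (f \<circ> g) x = D1 f (g x) * D1 g x"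
proof -
  have gh: "g \<in> Homeo_plus" using Diff1_plus_Homeo_plus[OF g] .
  have der: "((f \<circ> g) has_real_derivative D1 f (g x) * D1 g x) (at x within {0..1})"
    if x: "x \<in> {0..1}" for x
  proof (rule DERIV_image_chain)
    show "(f has_real_derivative D1 f (g x)) (at (g x) within g ` {0..1})"
      using Diff1_plus_has_derivative[OF f] Homeo_plus_in_iff[OF gh] Homeo_plus_image[OF gh] x by simp
  qed (rule Diff1_plus_has_derivative[OF g x])
  show "x \<in> {0..1} \<Longrightarrow> D1 (f \<circ> g) x = D1 f (g x) * D1 g x"
    using D1_eqI der by blast
  have "continuous_on {0..1} (\<lambda>x. D1 f (g x))"
    by (rule continuous_on_compose2[OF Diff1_plus_D1_continuous_on[OF f] Homeo_plus_continuous_on[OF gh]])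
       (simp add: Homeo_plus_image[OF gh])
  then show "f \<circ> g \<in> Diff1_plus"
    using Diff1_plus_D1_nonzero[OF f] Diff1_plus_D1_nonzero[OF g] Homeo_plus_in_iff[OF gh]
    by (intro Diff1_plusI[OF Homeo_plus_comp[OF Diff1_plus_Homeo_plus[OF f] gh] der]
          continuous_on_mult Diff1_plus_D1_continuous_on[OF g]) auto
qed

lemma Diff1_plus_inv:
  assumes f: "f \<in> Diff1_plus"
  shows "inv f \<in> Diff1_plus"
    and "y \<in> {0..1} \<Longrightarrow> D1 (inv f) y = 1 / D1 f (inv f y)"
proof -
  have fh: "f \<in> Homeo_plus" using Diff1_plus_Homeo_plus[OF f] .
  have der: "(inv f has_real_derivative 1 / D1 f (inv f y)) (at y within {0..1})"
    if y: "y \<in> {0..1}" for y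
  proof -
    define x where "x = inv f y"
    have x: "x \<in> {0..1}" "f x = y"
      unfolding x_def using y Homeo_plus_inv_in_iff[OF fh] Homeo_plus_f_inv[OF fh] by auto
    have der_f: "(f has_derivative (*) (D1 f x)) (at x within {0..1})"
      using Diff1_plus_has_derivative[OF f x(1)] by (simp add: has_field_derivative_def)
    have cont_inv: "continuous (at (f x) within f ` {0..1}) (inv f)"
      using Homeo_plus_continuous_on[OF Homeo_plus_inv[OF fh]] x y Homeo_plus_image[OF fh]
      by (simp add: continuous_on_eq_continuous_within)
    have inverse: "(*) (1 / D1 f x) \<circ> (*) (D1 f x) = id"
      using Diff1_plus_D1_nonzero[OF f x(1)] by (auto simp: fun_eq_iff)
    have "(inv f has_derivative (*) (1 / D1 f x)) (at (f x) within f ` {0..1})"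
      by (rule has_derivative_inverse_within[OF der_f cont_inv x(1) _ inverse])
         (simp_all add: linear_scale_left Homeo_plus_inv_f[OF fh])
    then show ?thesis
      using x Homeo_plus_image[OF fh] by (simp add: has_field_derivative_def x_def)
  qed
  show "y \<in> {0..1} \<Longrightarrow> D1 (inv f) y = 1 / D1 f (inv f y)"
    using D1_eqI der by blast
  have "continuous_on {0..1} (\<lambda>y. D1 f (inv f y))"
    by (rule continuous_on_compose2[OF Diff1_plus_D1_continuous_on[OF f]
          Homeo_plus_continuous_on[OF Homeo_plus_inv[OF fh]]])
       (simp add: Homeo_plus_image[OF Homeo_plus_inv[OF fh]])
  then show "inv f \<in> Diff1_plus"
    using Diff1_plus_D1_nonzero[OF f] Homeo_plus_inv_in_iff[OF fh]
    by (intro Diff1_plusI[OF Homeo_plus_inv[OF fh] der] continuous_on_divide) auto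
qed

lemma Diff1_plus_id: "id \<in> Diff1_plus" and D1_id: "x \<in> {0..1} \<Longrightarrow> D1 id x = 1"
proof -
  have der: "(id has_real_derivative 1) (at x within {0..1})" for x
    by (simp add: id_def)
  show "id \<in> Diff1_plus"
    by (rule Diff1_plusI[OF Homeo_plus_id der]) auto
  show "x \<in> {0..1} \<Longrightarrow> D1 id x = 1"
    by (rule D1_eqI[OF _ der])
qed

section \<open>\<open>C\<^sup>1\<close> convergence to the identity\<close>

lemma uniform_limit_const_compose:
  assumes lim: "uniform_limit S f (\<lambda>_. c) F" and maps: "\<And>n. b n ` T \<subseteq> S"
  shows "uniform_limit T (\<lambda>n x. f n (b n x)) (\<lambda>_. c) F"
proof (rule uniform_limitI)
  fix e :: real assume "e > 0"
  with lim have "\<forall>\<^sub>F n in F. \<forall>x\<in>S. dist (f n x) c < e" by (rule uniform_limitD)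
  then show "\<forall>\<^sub>F n in F. \<forall>x\<in>T. dist (f n (b n x)) c < e"
    by eventually_elim (use maps in blast)
qed

lemma C1_tendsto_id_comp:
  assumes a: "\<And>n. a n \<in> Diff1_plus" and b: "\<And>n. b n \<in> Diff1_plus"
    and lim_a: "C1_tendsto_id a" and lim_b: "C1_tendsto_id b"
  shows "C1_tendsto_id (\<lambda>n. a n \<circ> b n)"
  unfolding C1_tendsto_id_def
proof
  have maps: "b n ` {0..1} \<subseteq> {0..1}" for n
    using Homeo_plus_image[OF Diff1_plus_Homeo_plus[OF b]] by simp
  show "uniform_limit {0..1} (\<lambda>n. a n \<circ> b n) (\<lambda>x. x) sequentially"
  proof (rule uniform_limitI)
    fix e :: real assume "e > 0"
    then have "e / 2 > 0" by simp
    from uniform_limitD[OF conjunct1[OF lim_a[unfolded C1_tendsto_id_def]] this]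
         uniform_limitD[OF conjunct1[OF lim_b[unfolded C1_tendsto_id_def]] this]
    show "\<forall>\<^sub>F n in sequentially. \<forall>x\<in>{0..1}. dist ((a n \<circ> b n) x) x < e"
    proof eventually_elim
      case (elim n)
      show ?case
      proof
        fix x :: real assume "x \<in> {0..1}"
        then have "dist (a n (b n x)) (b n x) < e / 2" "dist (b n x) x < e / 2"
          using elim maps by blast+
        then show "dist ((a n \<circ> b n) x) x < e"
          using dist_triangle_less_add[of "a n (b n x)" "b n x" "e/2" x "e/2"]
          by (simp add: dist_commute)
      qed
    qed
  qed
  have "uniform_limit {0..1} (\<lambda>n x. D1 (a n) (b n x) * D1 (b n) x) (\<lambda>_. 1 * 1) sequentially"
    using lim_a lim_b unfolding C1_tendsto_id_def
    by (intro uniform_lim_mult uniform_limit_const_compose[OF _ maps]) (auto simp: image_constant_conv)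
  then show "uniform_limit {0..1} (\<lambda>n. D1 (a n \<circ> b n)) (\<lambda>_. 1) sequentially"
    by (rule iffD1[OF uniform_limit_cong', rotated -1]) (simp_all add: Diff1_plus_comp(2)[OF a b])
qed

lemma C1_tendsto_id_inv:
  assumes a: "\<And>n. a n \<in> Diff1_plus" and lim_a: "C1_tendsto_id a"
  shows "C1_tendsto_id (\<lambda>n. inv (a n))"
  unfolding C1_tendsto_id_def
proof
  have ah: "a n \<in> Homeo_plus" for n using Diff1_plus_Homeo_plus[OF a] .
  have maps: "inv (a n) ` {0..1} \<subseteq> {0..1}" for n
    using Homeo_plus_image[OF Homeo_plus_inv[OF ah]] by simp
  show "uniform_limit {0..1} (\<lambda>n. inv (a n)) (\<lambda>x. x) sequentially"
  proof (rule uniform_limitI)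
    fix e :: real assume "e > 0"
    with conjunct1[OF lim_a[unfolded C1_tendsto_id_def]]
    have "\<forall>\<^sub>F n in sequentially. \<forall>x\<in>{0..1}. dist (a n x) x < e" by (rule uniform_limitD)
    then show "\<forall>\<^sub>F n in sequentially. \<forall>x\<in>{0..1}. dist (inv (a n) x) x < e"
    proof eventually_elim
      case (elim n)
      show ?case
      proof
        fix x :: real assume "x \<in> {0..1}"
        then have "dist (a n (inv (a n) x)) (inv (a n) x) < e"
          using elim maps by blast
        then show "dist (inv (a n) x) x < e"
          by (simp add: dist_commute Homeo_plus_f_inv[OF ah])
      qed
    qed
  qed
  have "uniform_limit {0..1} (\<lambda>n x. inverse (D1 (a n) (inv (a n) x))) (inverse \<circ> (\<lambda>_. 1)) sequentially"
    using lim_a unfolding C1_tendsto_id_def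
    by (intro uniform_lim_inverse[where b=1] uniform_limit_const_compose[OF _ maps]) auto
  then show "uniform_limit {0..1} (\<lambda>n. D1 (inv (a n))) (\<lambda>_. 1) sequentially"
    by (rule iffD1[OF uniform_limit_cong', rotated -1])
       (simp_all add: Diff1_plus_inv(2)[OF a] divide_inverse)
qed

section \<open>Conjugation\<close>

lemma conj_id: "h \<in> Homeo_plus \<Longrightarrow> h \<circ> id \<circ> inv h = id"
  by (simp add: fun_eq_iff Homeo_plus_f_inv)

lemma conj_comp:
  "h \<in> Homeo_plus \<Longrightarrow> h \<circ> (a \<circ> b) \<circ> inv h = (h \<circ> a \<circ> inv h) \<circ> (h \<circ> b \<circ> inv h)"
  by (simp add: fun_eq_iff Homeo_plus_inv_f)

lemma conj_inv:
  assumes h: "h \<in> Homeo_plus" and a: "a \<in> Homeo_plus"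
  shows "h \<circ> inv a \<circ> inv h = inv (h \<circ> a \<circ> inv h)"
  by (rule inv_unique_comp[symmetric])
     (simp_all add: fun_eq_iff Homeo_plus_inv_f[OF h] Homeo_plus_f_inv[OF h]
        Homeo_plus_inv_f[OF a] Homeo_plus_f_inv[OF a])

lemma Diff1_plus_conj: "h \<in> Diff1_plus \<Longrightarrow> g \<in> Diff1_plus \<Longrightarrow> h \<circ> g \<circ> inv h \<in> Diff1_plus"
  by (intro Diff1_plus_comp(1) Diff1_plus_inv(1))

lemma D1_conj_at_fixed_point:
  assumes h: "h \<in> Diff1_plus" and g: "g \<in> Diff1_plus" and p: "p \<in> {0..1}" and gp: "g p = p"
  shows "D1 (h \<circ> g \<circ> inv h) (h p) = D1 g p"
proof -
  have hh: "h \<in> Homeo_plus" using Diff1_plus_Homeo_plus[OF h] .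
  have hp: "h p \<in> {0..1}" using p Homeo_plus_in_iff[OF hh] by blast
  have "D1 ((h \<circ> g) \<circ> inv h) (h p) = D1 (h \<circ> g) p * D1 (inv h) (h p)"
    using Diff1_plus_comp(2)[OF Diff1_plus_comp(1)[OF h g] Diff1_plus_inv(1)[OF h] hp]
    by (simp add: Homeo_plus_inv_f[OF hh])
  also have "\<dots> = D1 h p * D1 g p * (1 / D1 h p)"
    using Diff1_plus_comp(2)[OF h g p] Diff1_plus_inv(2)[OF h hp] gp
    by (simp add: Homeo_plus_inv_f[OF hh])
  also have "\<dots> = D1 g p"
    using Diff1_plus_D1_nonzero[OF h p] by simp
  finally show ?thesis by (simp add: comp_assoc)
qed

definition D1_one_at_fixed_points :: "(real \<Rightarrow> real) \<Rightarrow> bool" where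
  "D1_one_at_fixed_points g \<longleftrightarrow> (\<forall>p\<in>{0..1}. g p = p \<longrightarrow> D1 g p = 1)"

lemma D1_one_at_fixed_points_conj:
  assumes h: "h \<in> Diff1_plus" and g: "g \<in> Diff1_plus" and fix1: "D1_one_at_fixed_points g"
  shows "D1_one_at_fixed_points (h \<circ> g \<circ> inv h)"
  unfolding D1_one_at_fixed_points_def
proof (intro ballI impI)
  fix q :: real assume q: "q \<in> {0..1}" and fixed: "(h \<circ> g \<circ> inv h) q = q"
  have hh: "h \<in> Homeo_plus" using Diff1_plus_Homeo_plus[OF h] .
  define p where "p = inv h q"
  have p: "p \<in> {0..1}" "h p = q"
    unfolding p_def using q Homeo_plus_inv_in_iff[OF hh] Homeo_plus_f_inv[OF hh] by auto
  have "g p = p"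
    using fixed p(2) Homeo_plus_inv_f[OF hh] unfolding p_def by (metis comp_apply)
  then show "D1 (h \<circ> g \<circ> inv h) q = 1"
    using D1_conj_at_fixed_point[OF h g p(1)] fix1 p unfolding D1_one_at_fixed_points_def by metis
qed

section \<open>Induced homeomorphisms\<close>

lemma induced_by_conj:
  assumes k: "induced_by k g" and h: "h \<in> Homeo_plus"
  shows "induced_by (h \<circ> k \<circ> inv h) (h \<circ> g \<circ> inv h)"
proof -
  have "h \<circ> k \<circ> inv h \<in> Homeo_plus"
    using k h unfolding induced_by_def by (blast intro: Homeo_plus_comp Homeo_plus_inv)
  moreover have "(h \<circ> k \<circ> inv h) x = x \<or> (h \<circ> k \<circ> inv h) x = (h \<circ> g \<circ> inv h) x"
    if "x \<in> {0..1}" for x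
  proof -
    have "k (inv h x) = inv h x \<or> k (inv h x) = g (inv h x)"
      using k that Homeo_plus_inv_in_iff[OF h, of x] unfolding induced_by_def by blast
    then show ?thesis using Homeo_plus_f_inv[OF h, of x] by auto
  qed
  ultimately show ?thesis unfolding induced_by_def by blast
qed

lemma induced_by_eventually_eq:
  assumes k: "induced_by k g" and g: "g \<in> Homeo_plus" and x: "x \<in> {0..1}"
  shows "k x \<noteq> x \<Longrightarrow> \<forall>\<^sub>F y in at x within {0..1}. k y = g y"
    and "k x \<noteq> g x \<Longrightarrow> \<forall>\<^sub>F y in at x within {0..1}. k y = y"
proof -
  have kh: "k \<in> Homeo_plus" and kk: "\<And>y. y \<in> {0..1} \<Longrightarrow> k y = y \<or> k y = g y"
    using k unfolding induced_by_def by auto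
  have near: "\<forall>\<^sub>F y in at x within {0..1}. y \<in> {0..1}"
    by (simp add: eventually_at_filter)
  have lim_k: "((\<lambda>y. k y - y) \<longlongrightarrow> k x - x) (at x within {0..1})"
    and lim_kg: "((\<lambda>y. k y - g y) \<longlongrightarrow> k x - g x) (at x within {0..1})"
    using Homeo_plus_continuous_on[OF kh] Homeo_plus_continuous_on[OF g] x
    by (auto simp: continuous_on_def intro!: tendsto_diff)
  show "\<forall>\<^sub>F y in at x within {0..1}. k y = g y" if "k x \<noteq> x"
  proof -
    have "\<forall>\<^sub>F y in at x within {0..1}. k y \<noteq> y"
      using tendsto_imp_eventually_ne[OF lim_k, of 0] that by simp
    with near show ?thesis by eventually_elim (use kk in auto)
  qed
  show "\<forall>\<^sub>F y in at x within {0..1}. k y = y" if "k x \<noteq> g x"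
  proof -
    have "\<forall>\<^sub>F y in at x within {0..1}. k y \<noteq> g y"
      using tendsto_imp_eventually_ne[OF lim_kg, of 0] that by simp
    with near show ?thesis by eventually_elim (use kk in auto)
  qed
qed

lemma induced_by_cases:
  assumes "induced_by k g" and "x \<in> {0..1}"
  obtains "k x \<noteq> x" "k x = g x" | "k x \<noteq> g x" "k x = x" | "k x = x" "g x = x"
  using assms unfolding induced_by_def by metis

lemma induced_by_has_derivative:
  assumes g: "g \<in> Diff1_plus" "D1_one_at_fixed_points g" and k: "induced_by k g"
    and x: "x \<in> {0..1}"
  shows "(k has_real_derivative (if k x = x then 1 else D1 g x)) (at x within {0..1})"
  using k x
proof (cases rule: induced_by_cases)
  case 1
  then show ?thesis
    using Diff1_plus_has_derivative[OF g(1) x]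
      has_field_derivative_cong_eventually[OF induced_by_eventually_eq(1)[OF k Diff1_plus_Homeo_plus[OF g(1)] x]]
    by simp
next
  case 2
  then show ?thesis
    using has_field_derivative_cong_eventually[OF induced_by_eventually_eq(2)[OF k Diff1_plus_Homeo_plus[OF g(1)] x]]
    by simp
next
  case 3
  have "D1 g x = 1" using g(2) x 3(2) unfolding D1_one_at_fixed_points_def by blast
  then have lim_g: "((\<lambda>y. (g y - g x) / (y - x)) \<longlongrightarrow> 1) (at x within {0..1})"
    using Diff1_plus_has_derivative[OF g(1) x] by (simp add: has_field_derivative_iff)
  have "dist ((k y - k x) / (y - x)) 1 \<le> dist ((g y - g x) / (y - x)) 1"
    if "y \<in> {0..1}" "y \<noteq> x" for y
  proof -
    have "k y = y \<or> k y = g y" using k that(1) unfolding induced_by_def by blast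
    then show ?thesis using that(2) 3 by auto
  qed
  then have "\<forall>\<^sub>F y in at x within {0..1}.
      dist ((k y - k x) / (y - x)) 1 \<le> dist ((g y - g x) / (y - x)) 1"
    by (auto simp: eventually_at_filter)
  then have "((\<lambda>y. (k y - k x) / (y - x)) \<longlongrightarrow> 1) (at x within {0..1})"
    by (rule metric_tendsto_imp_tendsto[OF lim_g])
  then show ?thesis using 3 by (simp add: has_field_derivative_iff)
qed

lemma induced_by_derivative_continuous_on:
  assumes g: "g \<in> Diff1_plus" "D1_one_at_fixed_points g" and k: "induced_by k g"
  shows "continuous_on {0..1} (\<lambda>x. if k x = x then 1 else D1 g x)"
  unfolding continuous_on_def
proof
  fix x :: real assume x: "x \<in> {0..1}"
  have gh: "g \<in> Homeo_plus" using Diff1_plus_Homeo_plus[OF g(1)] .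
  have lim_D1g: "(D1 g \<longlongrightarrow> D1 g x) (at x within {0..1})"
    using Diff1_plus_D1_continuous_on[OF g(1)] x by (simp add: continuous_on_def)
  have fixed: "D1 g y = 1" if "y \<in> {0..1}" "g y = y" for y
    using g(2) that unfolding D1_one_at_fixed_points_def by blast
  show "((\<lambda>y. if k y = y then 1 else D1 g y) \<longlongrightarrow> (if k x = x then 1 else D1 g x))
      (at x within {0..1})"
    using k x
  proof (cases rule: induced_by_cases)
    case 1
    have "\<forall>\<^sub>F y in at x within {0..1}. D1 g y = (if k y = y then 1 else D1 g y)"
      using induced_by_eventually_eq(1)[OF k gh x 1(1)]
      unfolding eventually_at_filter by eventually_elim (auto intro: fixed)
    then show ?thesis using 1 Lim_transform_eventually[OF lim_D1g] by simp
  next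
    case 2
    have "\<forall>\<^sub>F y in at x within {0..1}. (if k y = y then 1 else D1 g y) = 1"
      using induced_by_eventually_eq(2)[OF k gh x 2(1)] by eventually_elim simp
    then show ?thesis using 2 by (simp add: tendsto_eventually)
  next
    case 3
    have "dist (if k y = y then 1 else D1 g y) 1 \<le> dist (D1 g y) (D1 g x)" for y
      using fixed[OF x 3(2)] by simp
    then show ?thesis
      using 3 fixed[OF x 3(2)] by (intro metric_tendsto_imp_tendsto[OF lim_D1g] always_eventually) simp_all
  qed
qed

lemma induced_by_Diff1_plus:
  assumes g: "g \<in> Diff1_plus" "D1_one_at_fixed_points g" and k: "induced_by k g"
  shows "k \<in> Diff1_plus"
    and "x \<in> {0..1} \<Longrightarrow> D1 k x = (if k x = x then 1 else D1 g x)"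
proof -
  show "k \<in> Diff1_plus"
  proof (rule Diff1_plusI[OF _ induced_by_has_derivative[OF g k]
        _ induced_by_derivative_continuous_on[OF g k]])
    show "k \<in> Homeo_plus" using k unfolding induced_by_def by blast
  qed (use Diff1_plus_D1_nonzero[OF g(1)] in auto)
  show "x \<in> {0..1} \<Longrightarrow> D1 k x = (if k x = x then 1 else D1 g x)"
    by (rule D1_eqI[OF _ induced_by_has_derivative[OF g k]])
qed

section \<open>The group \<open>G_H\<close>\<close>

lemma G_H_D1_one_at_fixed_points:
  assumes H: "\<And>n. h n \<in> Diff1_plus" and g: "g \<in> G_H h"
  shows "D1_one_at_fixed_points g"
  unfolding D1_one_at_fixed_points_def
proof (intro ballI impI)
  fix p :: real assume p: "p \<in> {0..1}" and gp: "g p = p"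
  have gd: "g \<in> Diff1_plus"
    and lim: "uniform_limit {0..1} (\<lambda>n. D1 (h n \<circ> g \<circ> inv (h n))) (\<lambda>_. 1) sequentially"
    using g unfolding G_H_def C1_tendsto_id_def by auto
  have "h n ` {p} \<subseteq> {0..1}" for n
    using p Homeo_plus_in_iff[OF Diff1_plus_Homeo_plus[OF H]] by blast
  from uniform_limit_const_compose[OF lim this]
  have "(\<lambda>n. D1 (h n \<circ> g \<circ> inv (h n)) (h n p)) \<longlonglongrightarrow> 1"
    by simp
  then show "D1 g p = 1"
    by (simp add: D1_conj_at_fixed_point[OF H gd p gp] LIMSEQ_const_iff)
qed

lemma G_H_induced:
  assumes H: "\<And>n. h n \<in> Diff1_plus" and g: "g \<in> G_H h" and k: "induced_by k g"
  shows "k \<in> G_H h"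
proof -
  have gd: "g \<in> Diff1_plus" and lim: "C1_tendsto_id (\<lambda>n. h n \<circ> g \<circ> inv (h n))"
    using g unfolding G_H_def by auto
  have fix1: "D1_one_at_fixed_points g" using G_H_D1_one_at_fixed_points[OF H g] .
  define cg where "cg n = h n \<circ> g \<circ> inv (h n)" for n
  define ck where "ck n = h n \<circ> k \<circ> inv (h n)" for n
  have cg: "cg n \<in> Diff1_plus" "D1_one_at_fixed_points (cg n)" for n
    unfolding cg_def using Diff1_plus_conj[OF H gd] D1_one_at_fixed_points_conj[OF H gd fix1] by auto
  have ck: "induced_by (ck n) (cg n)" for n
    unfolding ck_def cg_def using induced_by_conj[OF k Diff1_plus_Homeo_plus[OF H]] .
  have "dist (ck n y) y \<le> dist (cg n y) y \<and> dist (D1 (ck n) y) 1 \<le> dist (D1 (cg n) y) 1"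
    if "y \<in> {0..1}" for n y
    using ck[of n] that induced_by_Diff1_plus(2)[OF cg ck, of y] unfolding induced_by_def by auto
  then have "C1_tendsto_id ck"
    using lim unfolding C1_tendsto_id_def cg_def[symmetric]
    by (auto intro: metric_uniform_limit_imp_uniform_limit always_eventually)
  then show ?thesis
    unfolding G_H_def ck_def using induced_by_Diff1_plus(1)[OF gd fix1 k] by blast
qed

lemma is_group_G_H:
  assumes H: "\<And>n. h n \<in> Diff1_plus"
  shows "is_group (G_H h)"
  unfolding is_group_def
proof (intro conjI ballI)
  have "uniform_limit {0..1} (\<lambda>n. id) id sequentially"
    by (rule uniform_limit_const)
  moreover have "uniform_limit {0..1} (\<lambda>n. D1 id) (\<lambda>_. 1) sequentially"
    by (subst uniform_limit_cong'[where g="\<lambda>n _. 1" and i="\<lambda>_. 1"])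
       (simp_all add: D1_id uniform_limit_const)
  ultimately have "C1_tendsto_id (\<lambda>n. id)"
    unfolding C1_tendsto_id_def by (simp only: id_def[symmetric])
  then show "id \<in> G_H h"
    unfolding G_H_def using Diff1_plus_id conj_id[OF Diff1_plus_Homeo_plus[OF H]] by simp
next
  fix a b assume "a \<in> G_H h" "b \<in> G_H h"
  then have ab: "a \<in> Diff1_plus" "b \<in> Diff1_plus"
    and lim: "C1_tendsto_id (\<lambda>n. h n \<circ> a \<circ> inv (h n))" "C1_tendsto_id (\<lambda>n. h n \<circ> b \<circ> inv (h n))"
    unfolding G_H_def by auto
  have "C1_tendsto_id (\<lambda>n. (h n \<circ> a \<circ> inv (h n)) \<circ> (h n \<circ> b \<circ> inv (h n)))"
    by (rule C1_tendsto_id_comp[OF Diff1_plus_conj[OF H ab(1)] Diff1_plus_conj[OF H ab(2)] lim])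
  then show "a \<circ> b \<in> G_H h"
    unfolding G_H_def using Diff1_plus_comp(1)[OF ab] conj_comp[OF Diff1_plus_Homeo_plus[OF H]]
    by simp
next
  fix a assume "a \<in> G_H h"
  then have a: "a \<in> Diff1_plus" and lim: "C1_tendsto_id (\<lambda>n. h n \<circ> a \<circ> inv (h n))"
    unfolding G_H_def by auto
  have "C1_tendsto_id (\<lambda>n. inv (h n \<circ> a \<circ> inv (h n)))"
    by (rule C1_tendsto_id_inv[OF Diff1_plus_conj[OF H a] lim])
  then show "inv a \<in> G_H h"
    unfolding G_H_def
    using Diff1_plus_inv(1)[OF a] conj_inv[OF Diff1_plus_Homeo_plus[OF H] Diff1_plus_Homeo_plus[OF a]]
    by simp
qed

section \<open>The completion\<close>

lemma is_group_gen_group: "is_group (gen_group S)"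
  unfolding is_group_def by (blast intro: gen_group.intros)

lemma gen_group_subset:
  assumes "is_group H" and "S \<subseteq> H"
  shows "gen_group S \<subseteq> H"
proof
  fix a assume "a \<in> gen_group S"
  then show "a \<in> H"
    using assms unfolding is_group_def by induction blast+
qed

lemma subset_I_op: "S \<subseteq> Homeo_plus \<Longrightarrow> S \<subseteq> I_op S"
  unfolding I_op_def induced_by_def by (blast intro: gen_group.gen_base)

lemma I_op_subset_G_H:
  assumes H: "\<And>n. h n \<in> Diff1_plus" and S: "S \<subseteq> G_H h"
  shows "I_op S \<subseteq> G_H h"
  unfolding I_op_def
  by (rule gen_group_subset[OF is_group_G_H[OF H]]) (use S G_H_induced[of h, OF H] in blast)

lemma is_group_UN_chain:
  assumes groups: "\<And>n. is_group (A n)" and chain: "\<And>n. A n \<subseteq> A (Suc n)"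
  shows "is_group (\<Union>n. A n)"
proof -
  have mono: "A m \<subseteq> A (max m n)" "A n \<subseteq> A (max m n)" for m n
    using lift_Suc_mono_le[of A, OF chain] by auto
  show ?thesis
    unfolding is_group_def
  proof (intro conjI ballI)
    show "id \<in> (\<Union>n. A n)" using groups[of 0] unfolding is_group_def by blast
  next
    fix f g assume "f \<in> (\<Union>n. A n)" "g \<in> (\<Union>n. A n)"
    then obtain m n where "f \<in> A (max m n)" "g \<in> A (max m n)" using mono by blast
    then show "f \<circ> g \<in> (\<Union>n. A n)" using groups unfolding is_group_def by blast
  next
    fix f assume "f \<in> (\<Union>n. A n)"
    then show "inv f \<in> (\<Union>n. A n)" using groups unfolding is_group_def by blast
  qed
qed

theorem corollaryc:
  fixes G :: "(real \<Rightarrow> real) set" and h :: "nat \<Rightarrow> real \<Rightarrow> real"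
  assumes "is_group G" and "G \<subseteq> Diff1_plus"
    and "\<forall>n. h n \<in> Diff1_plus"
    and "\<forall>g\<in>G. C1_tendsto_id (\<lambda>n. h n \<circ> g \<circ> inv (h n))"
  shows "I_inf G \<subseteq> G_H h \<and> I_inf G \<subseteq> Diff1_plus \<and> is_group (I_inf G)
         \<and> C1_close_to_id (I_inf G)"
proof -
  have H: "\<And>n. h n \<in> Diff1_plus" using assms(3) by blast
  have G_H_Homeo_plus: "G_H h \<subseteq> Homeo_plus"
    unfolding G_H_def using Diff1_plus_Homeo_plus by blast
  have iterates: "(I_op ^^ n) G \<subseteq> G_H h" for n
  proof (induction n)
    case 0 show ?case using assms(2,4) unfolding G_H_def by auto
  next
    case (Suc n) then show ?case using I_op_subset_G_H[OF H] by simp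
  qed
  then have sub: "I_inf G \<subseteq> G_H h" unfolding I_inf_def by blast
  moreover have "is_group (I_inf G)"
    unfolding I_inf_def
  proof (rule is_group_UN_chain)
    show "is_group ((I_op ^^ n) G)" for n
      using assms(1) by (cases n) (simp_all add: I_op_def is_group_gen_group)
    show "(I_op ^^ n) G \<subseteq> (I_op ^^ Suc n) G" for n
      using subset_I_op[of "(I_op ^^ n) G"] iterates[of n] G_H_Homeo_plus by simp
  qed
  moreover have "C1_close_to_id (I_inf G)"
    unfolding C1_close_to_id_def using H sub unfolding G_H_def by blast
  ultimately show ?thesis unfolding G_H_def by blast
qed

end
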